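(* Let $0<\varepsilon<1/4$ and $3\varepsilon\le\delta\le1$ be real numbers, and let $m,k$ be positive integers with $k\le\delta m/4$. Set $r=(10/\varepsilon^2)\log(1/\varepsilon)$. Let $T_1,\dots,T_l$ be rooted trees, each on at most $t\le m/2$ vertices, such that every level set of every $T_i$ has at most $k$ vertices, and let $e_T=\sum_i e(T_i)$. Let $G$ be a balanced bipartite graph with $n$ vertices in each part and bipartite density $d_G$ (so $e(G)=d_Gn^2$), such that $d_Gn^2\ge e_T+(\delta+\varepsilon)n^2$. If $n\ge m\cdot\exp\big(r\log(1/(\delta+\varepsilon))\big)$, then $G$ contains pairwise edge-disjoint subgraphs isomorphic to $T_1,\dots,T_l$ respectively.
   Context: $\log$ is the natural logarithm. For a rooted tree with root $r$, $N^*(x)$ denotes the set of children of $x$; the level sets are $L_1=\{r\}$ and $L_{i+1}=\bigcup_{x\in L_i}N^*(x)$. A bipartite graph is balanced if its parts have equal size; the bipartite density of a bipartite graph with parts $A,B$ is $e(A,B)/(|A||B|)$. *)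

theory Defs
  imports Complex_Main
begin

definition simple_graph :: "'a set \<Rightarrow> 'a set set \<Rightarrow> bool" where
  "simple_graph V E \<longleftrightarrow> finite V \<and> (\<forall>e\<in>E. \<exists>x y. x \<in> V \<and> y \<in> V \<and> x \<noteq> y \<and> e = {x, y})"

definition is_walk :: "'a set set \<Rightarrow> 'a list \<Rightarrow> bool" where
  "is_walk E xs \<longleftrightarrow> xs \<noteq> [] \<and> (\<forall>i. Suc i < length xs \<longrightarrow> {xs ! i, xs ! Suc i} \<in> E)"

definition connected_graph :: "'a set \<Rightarrow> 'a set set \<Rightarrow> bool" where
  "connected_graph V E \<longleftrightarrow>
     (\<forall>x\<in>V. \<forall>y\<in>V. \<exists>xs. is_walk E xs \<and> hd xs = x \<and> last xs = y)"

definition is_cycle :: "'a set set \<Rightarrow> 'a list \<Rightarrow> bool" where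
  "is_cycle E xs \<longleftrightarrow> length xs \<ge> 3 \<and> distinct xs \<and> is_walk E xs \<and> {last xs, hd xs} \<in> E"

definition is_tree :: "'a set \<Rightarrow> 'a set set \<Rightarrow> bool" where
  "is_tree V E \<longleftrightarrow> simple_graph V E \<and> V \<noteq> {} \<and> connected_graph V E \<and> (\<nexists>xs. is_cycle E xs)"

definition rooted_tree :: "'a set \<Rightarrow> 'a set set \<Rightarrow> 'a \<Rightarrow> bool" where
  "rooted_tree V E r \<longleftrightarrow> is_tree V E \<and> r \<in> V"

definition gdist :: "'a set set \<Rightarrow> 'a \<Rightarrow> 'a \<Rightarrow> nat" where
  "gdist E x y = (LEAST n. \<exists>xs. is_walk E xs \<and> hd xs = x \<and> last xs = y \<and> length xs = Suc n)"

definition children :: "'a set set \<Rightarrow> 'a \<Rightarrow> 'a \<Rightarrow> 'a set" where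
  "children E r x = {y. {x, y} \<in> E \<and> gdist E r y = Suc (gdist E r x)}"

(* level_set E r i = L_{i+1}; so level_set E r 0 = L_1 = {r} *)
primrec level_set :: "'a set set \<Rightarrow> 'a \<Rightarrow> nat \<Rightarrow> 'a set" where
  "level_set E r 0 = {r}"
| "level_set E r (Suc i) = (\<Union>x\<in>level_set E r i. children E r x)"

definition bipartite_graph :: "'a set \<Rightarrow> 'a set \<Rightarrow> 'a set set \<Rightarrow> bool" where
  "bipartite_graph A B E \<longleftrightarrow> finite A \<and> finite B \<and> A \<inter> B = {} \<and>
     (\<forall>e\<in>E. \<exists>a\<in>A. \<exists>b\<in>B. e = {a, b})"

definition balanced_bipartite :: "'a set \<Rightarrow> 'a set \<Rightarrow> 'a set set \<Rightarrow> bool" where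
  "balanced_bipartite A B E \<longleftrightarrow> bipartite_graph A B E \<and> card A = card B"

definition bip_density :: "'a set \<Rightarrow> 'a set \<Rightarrow> 'a set set \<Rightarrow> real" where
  "bip_density A B E = real (card {e\<in>E. \<exists>a\<in>A. \<exists>b\<in>B. e = {a, b}}) / (real (card A) * real (card B))"

(* f embeds (V,ET) into the graph (W,E) as a subgraph: injective, edge preserving;
   the image (f`V, (`) f ` ET) is then a subgraph of (W,E) isomorphic to (V,ET) *)
definition subgraph_embedding :: "('b \<Rightarrow> 'a) \<Rightarrow> 'b set \<Rightarrow> 'b set set \<Rightarrow> 'a set \<Rightarrow> 'a set set \<Rightarrow> bool" where
  "subgraph_embedding f V ET W E \<longleftrightarrow> inj_on f V \<and> f ` V \<subseteq> W \<and> (\<forall>e\<in>ET. f ` e \<in> E)"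

end

theory Submission
  imports Defs
begin

(* Since n \<ge> m/(\<delta>+\<epsilon>) (the exponential factor is at least 1/(\<delta>+\<epsilon>)) and every tree
   has at most m/2 vertices, any (\<delta>+\<epsilon>)n^2 edges of G number more than (t-1)|V(G)|.
   Repeatedly deleting vertices of small degree therefore leaves a nonempty subgraph of minimum
   degree at least t, into which a tree with at most t vertices, grown leaf by leaf, embeds
   greedily. Embedding the trees one after another into the edges not used so far never leaves
   fewer than (\<delta>+\<epsilon>)n^2 edges available, because all trees together use only e_T edges. *)

definition neighbours :: "'a set \<Rightarrow> 'a set set \<Rightarrow> 'a \<Rightarrow> 'a set" where
  "neighbours W F w = {u\<in>W. u \<noteq> w \<and> {w, u} \<in> F}"

lemma finite_neighbours [simp]: "finite W \<Longrightarrow> finite (neighbours W F w)"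
  by (simp add: neighbours_def)

lemma neighbours_subset: "neighbours W F w \<subseteq> W"
  by (auto simp: neighbours_def)

lemma card_insert_neighbours [simp]: "finite W \<Longrightarrow> card (insert w (neighbours W F w)) = Suc (card (neighbours W F w))"
  by (simp add: neighbours_def)

lemma simple_graph_edgeE:
  assumes "simple_graph V E" "e \<in> E"
  obtains x y where "x \<in> V" "y \<in> V" "x \<noteq> y" "e = {x, y}"
  using assms unfolding simple_graph_def by blast

lemma simple_graph_edgeD:
  assumes "simple_graph V E" "{x, y} \<in> E"
  shows "x \<noteq> y" "x \<in> V" "y \<in> V"
proof -
  obtain a b where "a \<in> V" "b \<in> V" "a \<noteq> b" "{x, y} = {a, b}"
    using simple_graph_edgeE[OF assms] .
  then show "x \<noteq> y" "x \<in> V" "y \<in> V" by (auto simp: doubleton_eq_iff)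
qed

lemma simple_graph_edge_neighbours:
  assumes "simple_graph V E" "e \<in> E" "v \<in> e"
  obtains a where "a \<in> neighbours V E v" "e = {v, a}"
proof -
  obtain x y where "x \<in> V" "y \<in> V" "x \<noteq> y" "e = {x, y}"
    using simple_graph_edgeE[OF assms(1,2)] .
  with assms(3) have "v = x \<and> e = {v, y} \<or> v = y \<and> e = {v, x}" by auto
  with \<open>x \<in> V\<close> \<open>y \<in> V\<close> \<open>x \<noteq> y\<close> assms(2) show ?thesis
    using that unfolding neighbours_def by auto
qed

lemma simple_graph_remove_vertex:
  assumes "simple_graph V E" "E' \<subseteq> E" "\<And>e. e \<in> E' \<Longrightarrow> v \<notin> e"
  shows "simple_graph (V - {v}) E'"
  unfolding simple_graph_def
proof (intro conjI ballI)
  show "finite (V - {v})" using assms(1) by (simp add: simple_graph_def)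
  fix e assume e: "e \<in> E'"
  with assms(2) obtain x y where "x \<in> V" "y \<in> V" "x \<noteq> y" "e = {x, y}"
    using simple_graph_edgeE[OF assms(1)] by blast
  with assms(3)[OF e] show "\<exists>x y. x \<in> V - {v} \<and> y \<in> V - {v} \<and> x \<noteq> y \<and> e = {x, y}"
    by blast
qed

lemma simple_graph_subset: "simple_graph V E \<Longrightarrow> F \<subseteq> E \<Longrightarrow> simple_graph V F"
  unfolding simple_graph_def by blast

lemma simple_graph_finite_edges:
  assumes "simple_graph V E"
  shows "finite E"
proof (rule finite_subset)
  show "E \<subseteq> Pow V"
  proof
    fix e assume "e \<in> E"
    then obtain x y where "x \<in> V" "y \<in> V" "e = {x, y}" by (rule simple_graph_edgeE[OF assms])
    then show "e \<in> Pow V" by simp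
  qed
  show "finite (Pow V)" using assms by (simp add: simple_graph_def)
qed

section \<open>Forests grown leaf by leaf\<close>

inductive leaf_built :: "'b set \<Rightarrow> 'b set set \<Rightarrow> bool" where
  leaf_built_empty: "leaf_built {} {}"
| leaf_built_isolated: "leaf_built V E \<Longrightarrow> v \<notin> V \<Longrightarrow> leaf_built (insert v V) E"
| leaf_built_leaf: "leaf_built V E \<Longrightarrow> v \<notin> V \<Longrightarrow> u \<in> V \<Longrightarrow> leaf_built (insert v V) (insert {u, v} E)"

lemma leaf_built_finite: "leaf_built V E \<Longrightarrow> finite V"
  by (induction rule: leaf_built.induct) auto

lemma leaf_built_edges_subset: "leaf_built V E \<Longrightarrow> e \<in> E \<Longrightarrow> e \<subseteq> V"
  by (induction rule: leaf_built.induct) auto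

lemma leaf_built_finite_edges: "leaf_built V E \<Longrightarrow> finite E"
  by (meson PowI finite_Pow_iff finite_subset leaf_built_edges_subset leaf_built_finite subsetI)

lemma exists_outside_image:
  assumes "finite V" "finite S" "card V < card S"
  shows "\<exists>w\<in>S. w \<notin> f ` V"
proof (rule ccontr)
  assume "\<not> ?thesis"
  then have "card S \<le> card (f ` V)" using assms(1) by (intro card_mono) auto
  also have "\<dots> \<le> card V" using assms(1) by (rule card_image_le)
  finally show False using assms(3) by simp
qed

lemma embedding_extend:
  assumes f: "inj_on f V" "f ` V \<subseteq> W" "\<forall>e\<in>E. f ` e \<in> F"
    and "\<forall>e\<in>E. e \<subseteq> V" "v \<notin> V" "finite V" "finite W"
    and x: "x \<in> W" "card V \<le> card (neighbours W F x)"
  obtains w where "w = x \<or> w \<in> neighbours W F x" "w \<notin> f ` V" "inj_on (f(v := w)) (insert v V)"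
    "(f(v := w)) ` insert v V \<subseteq> W" "\<forall>e\<in>E. (f(v := w)) ` e \<in> F"
proof -
  have "finite (insert x (neighbours W F x))" using assms(7) by simp
  moreover have "card V < card (insert x (neighbours W F x))" using x(2) assms(7) by simp
  ultimately obtain w where w: "w \<in> insert x (neighbours W F x)" "w \<notin> f ` V"
    using exists_outside_image[OF assms(6)] by blast
  have image_eq: "(f(v := w)) ` e = f ` e" if "e \<subseteq> V" for e
    using that assms(5) by (intro image_cong) auto
  show ?thesis
  proof (rule that)
    show "w = x \<or> w \<in> neighbours W F x" "w \<notin> f ` V" using w by simp_all
    show "inj_on (f(v := w)) (insert v V)"
      using f(1) assms(5) w(2) image_eq[of V] by (auto simp: inj_on_def)
    show "(f(v := w)) ` insert v V \<subseteq> W"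
      using f(2) x(1) w(1) neighbours_subset[of W F x] image_eq[of V] by auto
    show "\<forall>e\<in>E. (f(v := w)) ` e \<in> F"
      using f(3) assms(4) image_eq by simp
  qed
qed

text \<open>A new vertex has more candidate images than the partial embedding has vertices, so
  some candidate is still unused.\<close>

lemma leaf_built_embed_min_degree:
  assumes "leaf_built V T" "finite W" "W \<noteq> {}"
    and deg: "\<And>w. w \<in> W \<Longrightarrow> card V \<le> Suc (card (neighbours W F w))"
  shows "\<exists>f. inj_on f V \<and> f ` V \<subseteq> W \<and> (\<forall>e\<in>T. f ` e \<in> F)"
  using assms(1) deg
proof (induction rule: leaf_built.induct)
  case leaf_built_empty
  then show ?case by auto
next
  case (leaf_built_isolated V E v)
  note finite_V = leaf_built_finite[OF leaf_built_isolated.hyps(1)]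
  obtain f where f: "inj_on f V" "f ` V \<subseteq> W" "\<forall>e\<in>E. f ` e \<in> F"
    using leaf_built_isolated finite_V by force
  have "\<forall>e\<in>E. e \<subseteq> V" using leaf_built_edges_subset[OF leaf_built_isolated.hyps(1)] by blast
  moreover obtain w0 where "w0 \<in> W" using assms(3) by auto
  moreover have "card V \<le> card (neighbours W F w0)"
    using leaf_built_isolated.prems[OF \<open>w0 \<in> W\<close>] finite_V leaf_built_isolated.hyps(2) by simp
  ultimately obtain w where "w = w0 \<or> w \<in> neighbours W F w0" "w \<notin> f ` V"
    "inj_on (f(v := w)) (insert v V)" "(f(v := w)) ` insert v V \<subseteq> W" "\<forall>e\<in>E. (f(v := w)) ` e \<in> F"
    by (rule embedding_extend[OF f _ leaf_built_isolated.hyps(2) finite_V assms(2)])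
  then show ?case by blast
next
  case (leaf_built_leaf V E v u)
  note finite_V = leaf_built_finite[OF leaf_built_leaf.hyps(1)]
  obtain f where f: "inj_on f V" "f ` V \<subseteq> W" "\<forall>e\<in>E. f ` e \<in> F"
    using leaf_built_leaf finite_V by force
  have "\<forall>e\<in>E. e \<subseteq> V" using leaf_built_edges_subset[OF leaf_built_leaf.hyps(1)] by blast
  moreover have "f u \<in> W" using f(2) leaf_built_leaf.hyps(3) by auto
  moreover have "card V \<le> card (neighbours W F (f u))"
    using leaf_built_leaf.prems[OF \<open>f u \<in> W\<close>] finite_V leaf_built_leaf.hyps(2) by simp
  ultimately obtain w where w: "w = f u \<or> w \<in> neighbours W F (f u)" "w \<notin> f ` V"
    and ext: "inj_on (f(v := w)) (insert v V)" "(f(v := w)) ` insert v V \<subseteq> W"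
      "\<forall>e\<in>E. (f(v := w)) ` e \<in> F"
    by (rule embedding_extend[OF f _ leaf_built_leaf.hyps(2) finite_V assms(2)])
  have "{f u, w} \<in> F" using w leaf_built_leaf.hyps(3) by (auto simp: neighbours_def)
  moreover have "(f(v := w)) ` {u, v} = {f u, w}" using leaf_built_leaf.hyps(2,3) by auto
  ultimately show ?case using ext by (metis insert_iff)
qed

lemma is_cycle_mono: "is_cycle E xs \<Longrightarrow> E \<subseteq> E' \<Longrightarrow> is_cycle E' xs"
  unfolding is_cycle_def is_walk_def by blast

lemma is_walk_snoc:
  assumes "is_walk E xs" "{last xs, y} \<in> E"
  shows "is_walk E (xs @ [y])"
  unfolding is_walk_def
proof (intro conjI allI impI)
  fix i assume i: "Suc i < length (xs @ [y])"
  show "{(xs @ [y]) ! i, (xs @ [y]) ! Suc i} \<in> E"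
  proof (cases "Suc i < length xs")
    case True
    then show ?thesis using assms(1) by (simp add: is_walk_def nth_append)
  next
    case False
    with i have "i = length xs - 1" by simp
    then show ?thesis using assms by (simp add: is_walk_def nth_append last_conv_nth)
  qed
qed simp

lemma is_cycle_drop:
  assumes "is_walk E xs" "distinct xs" "j + 3 \<le> length xs" "{last xs, xs ! j} \<in> E"
  shows "is_cycle E (drop j xs)"
  unfolding is_cycle_def
proof (intro conjI)
  show "is_walk E (drop j xs)"
    using assms(1,3) by (auto simp: is_walk_def add.commute[of j])
  show "{last (drop j xs), hd (drop j xs)} \<in> E"
    using assms(3,4) by (simp add: hd_drop_conv_nth)
qed (use assms(2,3) in auto)

lemma longest_path_exists:
  assumes "finite V" "v \<in> V"
  shows "\<exists>xs. distinct xs \<and> is_walk E xs \<and> set xs \<subseteq> V \<and>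
    (\<forall>ys. distinct ys \<and> is_walk E ys \<and> set ys \<subseteq> V \<longrightarrow> length ys \<le> length xs)"
proof -
  let ?path = "\<lambda>xs. distinct xs \<and> is_walk E xs \<and> set xs \<subseteq> V"
  have "?path [v]" using assms(2) by (simp add: is_walk_def)
  moreover have "length ys < Suc (card V)" if "?path ys" for ys
  proof -
    have "length ys = card (set ys)" using that by (simp add: distinct_card)
    also have "\<dots> \<le> card V" using that assms(1) by (intro card_mono) auto
    finally show ?thesis by simp
  qed
  ultimately show ?thesis
    using ex_has_greatest_nat[of ?path "[v]" length "Suc (card V)"] by blast
qed

text \<open>The last vertex of a longest path has a neighbour other than its predecessor; that
  neighbour lies on the path, closing a cycle.\<close>

lemma cycle_if_min_degree_two:
  assumes G: "simple_graph V E" "V \<noteq> {}"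
    and deg: "\<And>v. v \<in> V \<Longrightarrow> \<exists>a b. a \<noteq> b \<and> {v, a} \<in> E \<and> {v, b} \<in> E"
  shows "\<exists>xs. is_cycle E xs"
proof -
  have "finite V" using G(1) by (simp add: simple_graph_def)
  moreover obtain v where "v \<in> V" using G(2) by auto
  ultimately obtain xs where xs: "distinct xs" "is_walk E xs" "set xs \<subseteq> V"
    and longest: "\<And>ys. distinct ys \<Longrightarrow> is_walk E ys \<Longrightarrow> set ys \<subseteq> V \<Longrightarrow> length ys \<le> length xs"
    using longest_path_exists[of V v E] by auto
  define L where "L = length xs"
  have "xs \<noteq> []" using xs(2) by (simp add: is_walk_def)
  then have last_xs: "last xs = xs ! (L - 1)" "last xs \<in> V"
    using xs(3) by (auto simp: L_def last_conv_nth)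
  obtain a b where ab: "a \<noteq> b" "{last xs, a} \<in> E" "{last xs, b} \<in> E"
    using deg[OF last_xs(2)] by blast
  define y where "y = (if 2 \<le> L \<and> a = xs ! (L - 2) then b else a)"
  have y: "{last xs, y} \<in> E" "2 \<le> L \<Longrightarrow> y \<noteq> xs ! (L - 2)"
    using ab by (auto simp: y_def)
  then have y_ne: "y \<noteq> last xs" and y_V: "y \<in> V"
    using simple_graph_edgeD[OF G(1) y(1)] by auto
  have "y \<in> set xs"
  proof (rule ccontr)
    assume "y \<notin> set xs"
    then have "length (xs @ [y]) \<le> length xs"
      using xs y_V by (intro longest is_walk_snoc[OF xs(2) y(1)]) auto
    then show False by simp
  qed
  then obtain j where j: "j < L" "xs ! j = y" by (auto simp: L_def in_set_conv_nth)
  have j_last: "j \<noteq> L - 1" using j(2) y_ne last_xs(1) by auto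
  moreover have "j \<noteq> L - 2"
  proof
    assume "j = L - 2"
    with j(1) j_last have "2 \<le> L" by linarith
    with \<open>j = L - 2\<close> j(2) y(2) show False by blast
  qed
  ultimately have "j + 3 \<le> length xs" using j(1) unfolding L_def by linarith
  then have "is_cycle E (drop j xs)"
    using is_cycle_drop[OF xs(2,1)] j(2) y(1) by blast
  then show ?thesis ..
qed

text \<open>Peeling off an isolated vertex or a leaf keeps the graph simple and acyclic; if neither
  exists, every vertex has two neighbours and there is a cycle.\<close>

lemma acyclic_simple_graph_leaf_built:
  assumes "simple_graph V E" "\<nexists>xs. is_cycle E xs"
  shows "leaf_built V E"
  using assms
proof (induction "card V" arbitrary: V E rule: less_induct)
  case less
  have fin: "finite V" using less.prems(1) by (simp add: simple_graph_def)
  have peel: "leaf_built (V - {v}) E'"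
    if "v \<in> V" "E' \<subseteq> E" "\<And>e. e \<in> E' \<Longrightarrow> v \<notin> e" for v E'
  proof (rule less.hyps)
    show "card (V - {v}) < card V" using card_Diff1_less[OF fin that(1)] .
    show "simple_graph (V - {v}) E'" using simple_graph_remove_vertex[OF less.prems(1) that(2,3)] .
    show "\<nexists>xs. is_cycle E' xs" using less.prems(2) is_cycle_mono[OF _ that(2)] by blast
  qed
  consider (empty) "V = {}"
    | (isolated) v where "v \<in> V" "neighbours V E v = {}"
    | (leaf) v u where "v \<in> V" "neighbours V E v = {u}"
    | (branching) "V \<noteq> {}" "\<And>v. v \<in> V \<Longrightarrow> \<exists>a b. a \<noteq> b \<and> a \<in> neighbours V E v \<and> b \<in> neighbours V E v"
    by blast
  then show ?case
  proof cases
    case empty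
    then have "E = {}" using less.prems(1) by (auto simp: simple_graph_def)
    with empty show ?thesis by (simp add: leaf_built_empty)
  next
    case (isolated v)
    have "v \<notin> e" if "e \<in> E" for e
      using simple_graph_edge_neighbours[OF less.prems(1) that] isolated(2) by blast
    then have "leaf_built (insert v (V - {v})) E"
      using isolated(1) by (intro leaf_built_isolated peel) auto
    with isolated(1) show ?thesis by (simp add: insert_absorb)
  next
    case (leaf v u)
    have u: "u \<in> V" "u \<noteq> v" "{u, v} \<in> E"
      using leaf(2) unfolding neighbours_def by (auto simp: insert_commute)
    have "e = {u, v}" if "e \<in> E" "v \<in> e" for e
      using simple_graph_edge_neighbours[OF less.prems(1) that] leaf(2) by (auto simp: insert_commute)
    then have "leaf_built (insert v (V - {v})) (insert {u, v} (E - {{u, v}}))"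
      using leaf(1) u(1,2) by (intro leaf_built_leaf peel) auto
    moreover have "insert {u, v} (E - {{u, v}}) = E" using u(3) by blast
    ultimately show ?thesis using leaf(1) by (simp add: insert_absorb)
  next
    case branching
    then have "\<exists>xs. is_cycle E xs"
      by (intro cycle_if_min_degree_two[OF less.prems(1)]) (auto simp: neighbours_def)
    with less.prems(2) show ?thesis by blast
  qed
qed

lemma rooted_tree_leaf_built: "rooted_tree V E r \<Longrightarrow> leaf_built V E"
  unfolding rooted_tree_def is_tree_def by (blast intro: acyclic_simple_graph_leaf_built)

section \<open>Subgraphs of large minimum degree\<close>

lemma card_edges_remove_vertex:
  assumes "finite W" "w \<in> W" "\<And>e. e \<in> F \<Longrightarrow> card e = 2"
  shows "card {e\<in>F. e \<subseteq> W} = card {e\<in>F. e \<subseteq> W - {w}} + card (neighbours W F w)"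
proof -
  have edges_at_w: "{e\<in>F. e \<subseteq> W \<and> w \<in> e} = (\<lambda>u. {w, u}) ` neighbours W F w"
  proof (intro equalityI subsetI)
    fix e assume e: "e \<in> {e\<in>F. e \<subseteq> W \<and> w \<in> e}"
    then have "card e = 2" using assms(3) by blast
    then obtain a b where ab: "e = {a, b}" "a \<noteq> b" by (auto simp: card_2_iff)
    with e have "w = a \<and> b \<in> neighbours W F w \<and> e = {w, b} \<or> w = b \<and> a \<in> neighbours W F w \<and> e = {w, a}"
      by (auto simp: neighbours_def insert_commute)
    then show "e \<in> (\<lambda>u. {w, u}) ` neighbours W F w" by blast
  qed (use assms(2) in \<open>auto simp: neighbours_def\<close>)
  have "inj_on (\<lambda>u. {w, u}) (neighbours W F w)"
    by (auto simp: inj_on_def neighbours_def doubleton_eq_iff)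
  then have card_at_w: "card {e\<in>F. e \<subseteq> W \<and> w \<in> e} = card (neighbours W F w)"
    unfolding edges_at_w by (rule card_image)
  have "{e\<in>F. e \<subseteq> W} \<subseteq> Pow W" by blast
  then have "finite {e\<in>F. e \<subseteq> W}" using assms(1) by (simp add: finite_subset)
  then have "card ({e\<in>F. e \<subseteq> W - {w}} \<union> {e\<in>F. e \<subseteq> W \<and> w \<in> e})
      = card {e\<in>F. e \<subseteq> W - {w}} + card {e\<in>F. e \<subseteq> W \<and> w \<in> e}"
    by (intro card_Un_disjoint) (auto elim: finite_subset[rotated])
  moreover have "{e\<in>F. e \<subseteq> W - {w}} \<union> {e\<in>F. e \<subseteq> W \<and> w \<in> e} = {e\<in>F. e \<subseteq> W}" by blast
  ultimately show ?thesis using card_at_w by simp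
qed

text \<open>Deleting a vertex of degree at most \<open>D\<close> keeps the edge count above \<open>D\<close> times the
  vertex count, so the deletion process stops at a nonempty set of minimum degree above \<open>D\<close>.\<close>

lemma subgraph_min_degree_gt:
  fixes D :: real
  assumes "finite W" "\<And>e. e \<in> F \<Longrightarrow> card e = 2"
    and "D * real (card W) < real (card {e\<in>F. e \<subseteq> W})"
  shows "\<exists>W'\<subseteq>W. W' \<noteq> {} \<and> (\<forall>w\<in>W'. D < real (card (neighbours W' F w)))"
  using assms(1,3)
proof (induction "card W" arbitrary: W rule: less_induct)
  case less
  show ?case
  proof (cases "\<forall>w\<in>W. D < real (card (neighbours W F w))")
    case True
    have "W \<noteq> {}"
    proof
      assume "W = {}"
      moreover have "e \<noteq> {}" if "e \<in> F" for e using assms(2)[OF that] by auto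
      ultimately have "{e\<in>F. e \<subseteq> W} = {}" by blast
      with less.prems(2) \<open>W = {}\<close> show False
        by (metis card.empty less_irrefl mult_zero_right of_nat_0)
    qed
    with True show ?thesis by blast
  next
    case False
    then obtain w where w: "w \<in> W" "real (card (neighbours W F w)) \<le> D" by auto
    have "card W = Suc (card (W - {w}))" using card_Suc_Diff1[OF less.prems(1) w(1)] by simp
    moreover have "D * real (card (W - {w})) < real (card {e\<in>F. e \<subseteq> W - {w}})"
      using less.prems(2) w(2) card_edges_remove_vertex[OF less.prems(1) w(1) assms(2)]
        \<open>card W = Suc (card (W - {w}))\<close> by (simp add: algebra_simps)
    ultimately obtain W' where "W' \<subseteq> W - {w}" "W' \<noteq> {}" "\<forall>w\<in>W'. D < real (card (neighbours W' F w))"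
      using less.hyps[of "W - {w}"] less.prems(1) by auto
    then show ?thesis by blast
  qed
qed

lemma leaf_built_embed_dense:
  assumes "leaf_built V T" "simple_graph W F"
    and dense: "(real (card V) - 1) * real (card W) < real (card F)"
  shows "\<exists>f. subgraph_embedding f V T W F"
proof -
  have fin: "finite W" using assms(2) by (simp add: simple_graph_def)
  have edge: "card e = 2 \<and> e \<subseteq> W" if e: "e \<in> F" for e
  proof -
    obtain x y where "x \<in> W" "y \<in> W" "x \<noteq> y" "e = {x, y}"
      using simple_graph_edgeE[OF assms(2) e] .
    then show ?thesis by simp
  qed
  then have "{e\<in>F. e \<subseteq> W} = F" by blast
  with dense obtain W' where W': "W' \<subseteq> W" "W' \<noteq> {}"
    and deg: "\<forall>w\<in>W'. real (card V) - 1 < real (card (neighbours W' F w))"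
    using subgraph_min_degree_gt[OF fin, of F "real (card V) - 1"] edge by auto
  have "card V \<le> Suc (card (neighbours W' F w))" if "w \<in> W'" for w
  proof -
    have "real (card V) < real (Suc (card (neighbours W' F w)))" using deg that by auto
    then show ?thesis by (simp only: of_nat_less_iff)
  qed
  then obtain f where "inj_on f V" "f ` V \<subseteq> W'" "\<forall>e\<in>T. f ` e \<in> F"
    using leaf_built_embed_min_degree[OF assms(1) finite_subset[OF W'(1) fin] W'(2), of F] by blast
  with W'(1) show ?thesis unfolding subgraph_embedding_def by blast
qed

section \<open>Edge-disjoint embeddings\<close>

lemma subgraph_embedding_mono:
  "subgraph_embedding f V T W F \<Longrightarrow> F \<subseteq> F' \<Longrightarrow> subgraph_embedding f V T W F'"
  unfolding subgraph_embedding_def by blast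

lemma greedy_edge_disjoint_embeddings:
  fixes TV :: "nat \<Rightarrow> 'b set" and TE :: "nat \<Rightarrow> 'b set set" and F :: "'a set set"
  assumes "finite F" "\<And>i. i < l \<Longrightarrow> finite (TE i)"
    and embed: "\<And>i F'. i < l \<Longrightarrow> F' \<subseteq> F \<Longrightarrow> c \<le> real (card F') \<Longrightarrow>
                   \<exists>g. subgraph_embedding g (TV i) (TE i) W F'"
    and budget: "real (\<Sum>i<l. card (TE i)) + c \<le> real (card F)"
  shows "\<exists>f. (\<forall>i<l. subgraph_embedding (f i) (TV i) (TE i) W F) \<and>
             (\<forall>i<l. \<forall>j<l. i \<noteq> j \<longrightarrow> ((`) (f i) ` TE i) \<inter> ((`) (f j) ` TE j) = {})"
  using assms
proof (induction l arbitrary: F)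
  case 0
  then show ?case by simp
next
  case (Suc l)
  have "c \<le> real (card F)"
    using Suc.prems(4) of_nat_0_le_iff[of "\<Sum>i<Suc l. card (TE i)"] by linarith
  then obtain g where g: "subgraph_embedding g (TV l) (TE l) W F"
    using Suc.prems(3)[of l F] by blast
  define X where "X = (`) g ` TE l"
  have "X \<subseteq> F" using g by (auto simp: X_def subgraph_embedding_def)
  have "card X \<le> card (TE l)" unfolding X_def using Suc.prems(2) by (simp add: card_image_le)
  then have "real (card F) \<le> real (card (F - X)) + real (card (TE l))"
    using card_Diff_subset[OF finite_subset[OF \<open>X \<subseteq> F\<close> Suc.prems(1)] \<open>X \<subseteq> F\<close>]
      card_mono[OF Suc.prems(1) \<open>X \<subseteq> F\<close>] by linarith
  then have remaining: "real (\<Sum>i<l. card (TE i)) + c \<le> real (card (F - X))"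
    using Suc.prems(4) by simp
  have "\<exists>f. (\<forall>i<l. subgraph_embedding (f i) (TV i) (TE i) W (F - X)) \<and>
      (\<forall>i<l. \<forall>j<l. i \<noteq> j \<longrightarrow> ((`) (f i) ` TE i) \<inter> ((`) (f j) ` TE j) = {})"
  proof (rule Suc.IH)
    show "finite (F - X)" using Suc.prems(1) by simp
    show "finite (TE i)" if "i < l" for i using Suc.prems(2) that by simp
    show "\<exists>g. subgraph_embedding g (TV i) (TE i) W F'"
      if "i < l" "F' \<subseteq> F - X" "c \<le> real (card F')" for i F'
      using Suc.prems(3)[OF less_SucI[OF that(1)] order_trans[OF that(2) Diff_subset] that(3)] .
  qed (fact remaining)
  then obtain f where f: "\<forall>i<l. subgraph_embedding (f i) (TV i) (TE i) W (F - X)"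
      "\<forall>i<l. \<forall>j<l. i \<noteq> j \<longrightarrow> ((`) (f i) ` TE i) \<inter> ((`) (f j) ` TE j) = {}"
    by blast
  have old_edges: "(`) (f i) ` TE i \<subseteq> F - X" if "i < l" for i
    using f(1) that by (auto simp: subgraph_embedding_def)
  show ?case
  proof (intro exI[of _ "f(l := g)"] conjI allI impI)
    fix i assume "i < Suc l"
    then show "subgraph_embedding ((f(l := g)) i) (TV i) (TE i) W F"
      using g f(1) subgraph_embedding_mono[of "f i" "TV i" "TE i" W "F - X" F] by (cases "i = l") auto
  next
    fix i j assume "i < Suc l" "j < Suc l" "i \<noteq> j"
    then consider "i < l" "j < l" | "i = l" "j < l" | "i < l" "j = l" by linarith
    then show "((`) ((f(l := g)) i) ` TE i) \<inter> ((`) ((f(l := g)) j) ` TE j) = {}"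
    proof cases
      case 1
      then show ?thesis using f(2) \<open>i \<noteq> j\<close> by simp
    next
      case 2
      then have "(`) ((f(l := g)) i) ` TE i = X" "(`) ((f(l := g)) j) ` TE j \<subseteq> F - X"
        using old_edges[of j] by (simp_all add: X_def)
      then show ?thesis by blast
    next
      case 3
      then have "(`) ((f(l := g)) j) ` TE j = X" "(`) ((f(l := g)) i) ` TE i \<subseteq> F - X"
        using old_edges[of i] by (simp_all add: X_def)
      then show ?thesis by blast
    qed
  qed
qed

lemma bipartite_simple_graph:
  assumes "bipartite_graph A B E"
  shows "simple_graph (A \<union> B) E"
  unfolding simple_graph_def
proof (intro conjI ballI)
  show "finite (A \<union> B)" using assms by (simp add: bipartite_graph_def)
  fix e assume "e \<in> E"
  then obtain a b where "a \<in> A" "b \<in> B" "e = {a, b}"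
    using assms unfolding bipartite_graph_def by blast
  moreover have "a \<noteq> b" using assms \<open>a \<in> A\<close> \<open>b \<in> B\<close> by (auto simp: bipartite_graph_def)
  ultimately show "\<exists>x y. x \<in> A \<union> B \<and> y \<in> A \<union> B \<and> x \<noteq> y \<and> e = {x, y}" by blast
qed

lemma card_bipartite_edges_le:
  assumes "bipartite_graph A B E"
  shows "card E \<le> card A * card B"
proof -
  have "E \<subseteq> (\<lambda>(a, b). {a, b}) ` (A \<times> B)"
  proof
    fix e assume "e \<in> E"
    then obtain a b where "a \<in> A" "b \<in> B" "e = {a, b}"
      using assms unfolding bipartite_graph_def by blast
    then show "e \<in> (\<lambda>(a, b). {a, b}) ` (A \<times> B)" by force
  qed
  then have "card E \<le> card ((\<lambda>(a, b). {a, b}) ` (A \<times> B))"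
    using assms unfolding bipartite_graph_def by (intro card_mono) auto
  also have "\<dots> \<le> card (A \<times> B)" using assms unfolding bipartite_graph_def by (intro card_image_le) auto
  finally show ?thesis by (simp add: card_cartesian_product)
qed

lemma bip_density_balanced:
  assumes "balanced_bipartite A B E"
  shows "bip_density A B E * real (card A) ^ 2 = real (card E)"
proof -
  have bip: "bipartite_graph A B E" and "card B = card A"
    using assms unfolding balanced_bipartite_def by auto
  have "{e\<in>E. \<exists>a\<in>A. \<exists>b\<in>B. e = {a, b}} = E" using bip unfolding bipartite_graph_def by blast
  moreover have "card E = 0" if "card A = 0"
    using card_bipartite_edges_le[OF bip] that by simp
  ultimately show ?thesis
    using \<open>card B = card A\<close> unfolding bip_density_def by (cases "card A = 0") (auto simp: power2_eq_square)
qed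

lemma bip_density_le_one:
  assumes "bipartite_graph A B E"
  shows "bip_density A B E \<le> 1"
proof -
  have "card {e\<in>E. \<exists>a\<in>A. \<exists>b\<in>B. e = {a, b}} \<le> card A * card B"
    using assms by (intro card_bipartite_edges_le) (auto simp: bipartite_graph_def)
  then show ?thesis
    unfolding bip_density_def by (simp add: divide_le_eq_1 flip: of_nat_mult) auto
qed

lemma size_threshold_imp_le:
  fixes \<epsilon> s :: real
  assumes "0 < \<epsilon>" "\<epsilon> < 1/4" "0 < s" "s \<le> 1"
    and "real n \<ge> real m * exp ((10 / \<epsilon>^2) * ln (1 / \<epsilon>) * ln (1 / s))"
  shows "real m \<le> s * real n"
proof -
  define r where "r = (10 / \<epsilon>^2) * ln (1 / \<epsilon>)"
  have "3/4 \<le> ln (1 / \<epsilon>)"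
    using ln_le_minus_one[OF assms(1)] assms(1,2) by (simp add: ln_div)
  moreover have "10 \<le> 10 / \<epsilon>^2"
    using assms(1,2) by (simp add: field_simps power_le_one)
  ultimately have "1 \<le> r"
    using mult_mono[of 10 "10 / \<epsilon>^2" "3/4" "ln (1 / \<epsilon>)"] by (simp add: r_def)
  moreover have "0 \<le> ln (1 / s)" using assms(3,4) by simp
  ultimately have "ln (1 / s) \<le> r * ln (1 / s)"
    using mult_right_mono[of 1 r "ln (1 / s)"] by simp
  then have "1 / s \<le> exp (r * ln (1 / s))"
    using assms(3) by (metis exp_le_cancel_iff exp_ln zero_less_divide_1_iff)
  then have "real m * (1 / s) \<le> real m * exp (r * ln (1 / s))"
    by (rule mult_left_mono) simp
  also have "\<dots> \<le> real n" unfolding r_def by (rule assms(5))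
  finally have "real m / s \<le> real n" by simp
  then show ?thesis using assms(3) by (simp add: field_simps)
qed

theorem theorem4p2:
  fixes \<epsilon> \<delta> :: real and m k t l :: nat
    and TV :: "nat \<Rightarrow> 'b set" and TE :: "nat \<Rightarrow> 'b set set" and root :: "nat \<Rightarrow> 'b"
    and A B :: "'a set" and E :: "'a set set" and n :: nat
  assumes "0 < \<epsilon>" "\<epsilon> < 1/4" "3 * \<epsilon> \<le> \<delta>" "\<delta> \<le> 1"
    and "m > 0" "k > 0" "real k \<le> \<delta> * real m / 4"
    and "real t \<le> real m / 2"
    and trees: "\<And>i. i < l \<Longrightarrow> rooted_tree (TV i) (TE i) (root i)"
    and sizes: "\<And>i. i < l \<Longrightarrow> card (TV i) \<le> t"
    and levels: "\<And>i j. i < l \<Longrightarrow> card (level_set (TE i) (root i) j) \<le> k"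
    and G: "balanced_bipartite A B E" "card A = n"
    and dens: "bip_density A B E * real n ^ 2
                 \<ge> real (\<Sum>i<l. card (TE i)) + (\<delta> + \<epsilon>) * real n ^ 2"
    and nbig: "real n \<ge> real m * exp ((10 / \<epsilon>^2) * ln (1 / \<epsilon>) * ln (1 / (\<delta> + \<epsilon>)))"
  shows "\<exists>f :: nat \<Rightarrow> 'b \<Rightarrow> 'a.
           (\<forall>i<l. subgraph_embedding (f i) (TV i) (TE i) (A \<union> B) E) \<and>
           (\<forall>i<l. \<forall>j<l. i \<noteq> j \<longrightarrow> ((`) (f i) ` TE i) \<inter> ((`) (f j) ` TE j) = {})"
proof -
  define s where "s = \<delta> + \<epsilon>"
  have bip: "bipartite_graph A B E" and "card B = n"
    using G unfolding balanced_bipartite_def by auto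
  have simple: "simple_graph (A \<union> B) E" by (rule bipartite_simple_graph[OF bip])
  have card_AB: "card (A \<union> B) = 2 * n"
    using bip G(2) \<open>card B = n\<close> unfolding bipartite_graph_def by (simp add: card_Un_disjoint)
  have budget: "real (\<Sum>i<l. card (TE i)) + s * real n ^ 2 \<le> real (card E)"
    using dens bip_density_balanced[OF G(1)] G(2) unfolding s_def by simp
  have "0 < n"
    using nbig \<open>m > 0\<close> by (metis exp_gt_zero mult_pos_pos not_gr0 of_nat_0 of_nat_0_less_iff not_le)
  have "s * real n ^ 2 \<le> bip_density A B E * real n ^ 2"
    using dens of_nat_0_le_iff[of "\<Sum>i<l. card (TE i)"] unfolding s_def by linarith
  then have "s \<le> 1" using bip_density_le_one[OF bip] \<open>0 < n\<close> by simp
  moreover have "0 < s" using \<open>0 < \<epsilon>\<close> \<open>3 * \<epsilon> \<le> \<delta>\<close> unfolding s_def by linarith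
  ultimately have "real m \<le> s * real n"
    using size_threshold_imp_le[OF \<open>0 < \<epsilon>\<close> \<open>\<epsilon> < 1/4\<close>] nbig unfolding s_def by blast
  have embed: "\<exists>g. subgraph_embedding g (TV i) (TE i) (A \<union> B) F"
    if "i < l" "F \<subseteq> E" "s * real n ^ 2 \<le> real (card F)" for i F
  proof (rule leaf_built_embed_dense)
    show "leaf_built (TV i) (TE i)" using rooted_tree_leaf_built[OF trees[OF \<open>i < l\<close>]] .
    show "simple_graph (A \<union> B) F" using simple_graph_subset[OF simple \<open>F \<subseteq> E\<close>] .
    have "2 * real (card (TV i)) \<le> s * real n"
      using sizes[OF \<open>i < l\<close>] \<open>real t \<le> real m / 2\<close> \<open>real m \<le> s * real n\<close> by linarith
    then have "2 * real (card (TV i)) * real n \<le> s * real n * real n"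
      by (simp add: mult_right_mono)
    then have "(real (card (TV i)) - 1) * real (card (A \<union> B)) \<le> s * real n ^ 2 - 2 * real n"
      unfolding card_AB by (simp add: power2_eq_square algebra_simps)
    with \<open>0 < n\<close> that(3) show "(real (card (TV i)) - 1) * real (card (A \<union> B)) < real (card F)"
      by linarith
  qed
  have finite_TE: "finite (TE i)" if "i < l" for i
    using leaf_built_finite_edges[OF rooted_tree_leaf_built[OF trees[OF that]]] .
  show ?thesis
    using greedy_edge_disjoint_embeddings[OF simple_graph_finite_edges[OF simple] finite_TE embed budget] .
qed

end
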